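(* Fix $\alpha>0$, $\gamma>0$, $\Sigma_\epsilon>0$, $\omega_1\in[0,1)$, $\omega_2\in[0,1]$. Let $$T(x)=\left(\frac{\omega_2}{x^2}+\frac{(1-\omega_2)\alpha^2\gamma^2\Sigma_\epsilon}{(1+\gamma-x)^2}\right)^{-1/2},\qquad f_y(x)=\left(\frac{\omega_1}{x^2}+\frac{(1-\omega_1)\gamma^2\alpha^2\Sigma_\epsilon}{(1+\gamma-y)^2}\right)^{-1/2},$$ and $A(\lambda)=\frac{\gamma^2\alpha^2\Sigma_\epsilon}{(1+\gamma-\lambda)^2}$. Let $J\subset[1,1+\gamma)$ be a compact $T$-invariant interval, let $\hat I$ be the set of bi-infinite sequences $\pmb\lambda=(\lambda_{2,i})_{i\in\mathbb Z}$ in $J$ with $T(\lambda_{2,i})=\lambda_{2,i+1}$ for all $i$, and let $\hat T:\hat I\to\hat I$ be the shift $\hat T((\lambda_{2,i})_i)=(\lambda_{2,i+1})_i$. Then the random fixed point of the forced bank, i.e. the function $x:\hat I\to(0,\infty)$ satisfying $f_{\lambda_{2,0}}(x(\pmb\lambda))=x(\hat T(\pmb\lambda))$ for all $\pmb\lambda\in\hat I$, is given by $$x(\pmb\lambda)=\frac{1}{\sqrt{(1-\omega_1)\sum_{i=0}^{\infty}A(\lambda_{2,-1-i})\,\omega_1^{\,i}}}$$ (with $\omega_1^0=1$); in particular this series converges, $x$ is positive and satisfies the stated relation.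
   Context: This is the case $\pi_1=0$ of the two-bank leverage model: the large bank's leverage evolves by $\lambda_{2,t+1}=T(\lambda_{2,t})$ and the small bank's by $\lambda_{1,t+1}=f_{\lambda_{2,t}}(\lambda_{1,t})$; $\hat T$ is the invertible (natural) extension of $T$. *)

theory Defs
  imports "HOL-Analysis.Analysis"
begin

definition Tmap :: "real \<Rightarrow> real \<Rightarrow> real \<Rightarrow> real \<Rightarrow> real \<Rightarrow> real" where
  "Tmap \<alpha> \<gamma> \<Sigma> \<omega>2 x =
     (\<omega>2 / x^2 + (1 - \<omega>2) * \<alpha>^2 * \<gamma>^2 * \<Sigma> / (1 + \<gamma> - x)^2) powr (-1/2)"

definition fmap :: "real \<Rightarrow> real \<Rightarrow> real \<Rightarrow> real \<Rightarrow> real \<Rightarrow> real \<Rightarrow> real" where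
  "fmap \<alpha> \<gamma> \<Sigma> \<omega>1 y x =
     (\<omega>1 / x^2 + (1 - \<omega>1) * \<gamma>^2 * \<alpha>^2 * \<Sigma> / (1 + \<gamma> - y)^2) powr (-1/2)"

definition Afun :: "real \<Rightarrow> real \<Rightarrow> real \<Rightarrow> real \<Rightarrow> real" where
  "Afun \<alpha> \<gamma> \<Sigma> l = \<gamma>^2 * \<alpha>^2 * \<Sigma> / (1 + \<gamma> - l)^2"

definition Ihat :: "(real \<Rightarrow> real) \<Rightarrow> real set \<Rightarrow> (int \<Rightarrow> real) set" where
  "Ihat T J = {lam. (\<forall>i. lam i \<in> J) \<and> (\<forall>i. T (lam i) = lam (i + 1))}"

definition That :: "(int \<Rightarrow> real) \<Rightarrow> (int \<Rightarrow> real)" where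
  "That lam = (\<lambda>i. lam (i + 1))"

end

theory Submission
  imports Defs
begin

text \<open>
  Write S(lam) for the discounted past sum of A(lam (-1-i)) w1^i, so that x = ((1 - w1) S)^(-1/2)
  and w1 / x^2 + (1 - w1) A(lam 0) = (1 - w1) (A(lam 0) + w1 S(lam)). Shifting the orbit
  prepends A(lam 0) to the discounted past: S(That lam) = A(lam 0) + w1 S(lam), which is
  exactly the required relation. Convergence only uses that the orbit stays in [a, b] with
  b < 1 + gamma, where A is bounded.
\<close>

text \<open>Also at \<open>y = 0\<close>: there \<open>0 powr _ = 0\<close> and \<open>1 / 0 = 0\<close>.\<close>
lemma powr_neg_half: "(y::real) \<ge> 0 \<Longrightarrow> y powr (-1/2) = 1 / sqrt y"
  by (cases "y = 0") (simp_all add: powr_minus_divide powr_half_sqrt)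

lemma summable_bounded_mult_geometric:
  fixes c :: "nat \<Rightarrow> real"
  assumes "\<And>i. \<bar>c i\<bar> \<le> M" and "0 \<le> w" and "w < 1"
  shows "summable (\<lambda>i. c i * w ^ i)"
proof (rule summable_comparison_test')
  show "summable (\<lambda>i. M * w ^ i)"
    using assms(2,3) by (intro summable_mult summable_geometric) simp
  show "norm (c i * w ^ i) \<le> M * w ^ i" for i
    using assms(1)[of i] assms(2) by (simp add: abs_mult mult_right_mono)
qed

lemma suminf_past_That:
  fixes h :: "real \<Rightarrow> real" and w :: real
  assumes "summable (\<lambda>i. h (lam (-1 - int i)) * w ^ i)"
  shows "(\<Sum>i. h (That lam (-1 - int i)) * w ^ i)
           = h (lam 0) + w * (\<Sum>i. h (lam (-1 - int i)) * w ^ i)"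
proof -
  have shift: "That lam (-1 - int i) = lam (- int i)" for i
    by (simp add: That_def)
  have "summable (\<lambda>i. w * (h (lam (-1 - int i)) * w ^ i))"
    using summable_mult[OF assms] .
  then have "summable (\<lambda>i. h (lam (- int (Suc i))) * w ^ Suc i)"
    by (simp add: algebra_simps)
  then have "summable (\<lambda>i. h (lam (- int i)) * w ^ i)"
    by (rule summable_Suc_iff[THEN iffD1])
  from powser_split_head(1)[OF this] show ?thesis
    by (simp add: shift mult.commute)
qed

lemma Afun_pos: "\<alpha> > 0 \<Longrightarrow> \<gamma> > 0 \<Longrightarrow> \<Sigma> > 0 \<Longrightarrow> l < 1 + \<gamma> \<Longrightarrow> Afun \<alpha> \<gamma> \<Sigma> l > 0"
  by (simp add: Afun_def)

lemma Afun_mono: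
  assumes "\<Sigma> \<ge> 0" and "l \<le> m" and "m < 1 + \<gamma>"
  shows "Afun \<alpha> \<gamma> \<Sigma> l \<le> Afun \<alpha> \<gamma> \<Sigma> m"
proof -
  have "(1 + \<gamma> - m)^2 \<le> (1 + \<gamma> - l)^2"
    using assms(2,3) by (intro power_mono) auto
  then show ?thesis
    unfolding Afun_def using assms by (intro divide_left_mono) auto
qed

lemma fmap_eq_Afun: "fmap \<alpha> \<gamma> \<Sigma> \<omega> y x = (\<omega> / x^2 + (1 - \<omega>) * Afun \<alpha> \<gamma> \<Sigma> y) powr (-1/2)"
  unfolding fmap_def Afun_def by (simp only: times_divide_eq_right mult.assoc)

lemma fmap_inv_sqrt:
  assumes "0 \<le> \<omega>" and "\<omega> \<le> 1" and "0 \<le> S" and "0 \<le> Afun \<alpha> \<gamma> \<Sigma> y"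
  shows "fmap \<alpha> \<gamma> \<Sigma> \<omega> y (1 / sqrt ((1 - \<omega>) * S))
           = 1 / sqrt ((1 - \<omega>) * (Afun \<alpha> \<gamma> \<Sigma> y + \<omega> * S))"
proof -
  have "(1 / sqrt ((1 - \<omega>) * S))^2 = 1 / ((1 - \<omega>) * S)"
    using assms by (simp add: power_divide)
  then have "\<omega> / (1 / sqrt ((1 - \<omega>) * S))^2 + (1 - \<omega>) * Afun \<alpha> \<gamma> \<Sigma> y
               = (1 - \<omega>) * (Afun \<alpha> \<gamma> \<Sigma> y + \<omega> * S)"
    by (simp add: algebra_simps)
  moreover have "0 \<le> (1 - \<omega>) * (Afun \<alpha> \<gamma> \<Sigma> y + \<omega> * S)"
    using assms by simp
  ultimately show ?thesis
    unfolding fmap_eq_Afun by (simp only: powr_neg_half)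
qed

theorem mainTheorem5:
  fixes \<alpha> \<gamma> \<Sigma> \<omega>1 \<omega>2 a b :: real and J :: "real set"
  assumes "\<alpha> > 0" and "\<gamma> > 0" and "\<Sigma> > 0"
    and "0 \<le> \<omega>1" and "\<omega>1 < 1" and "0 \<le> \<omega>2" and "\<omega>2 \<le> 1"
    and "J = {a..b}" and "a \<le> b" and "J \<subseteq> {1..<1 + \<gamma>}"
    and "Tmap \<alpha> \<gamma> \<Sigma> \<omega>2 ` J \<subseteq> J"
  defines "x \<equiv> (\<lambda>lam::int \<Rightarrow> real. 1 / sqrt ((1 - \<omega>1) *
              (\<Sum>i. Afun \<alpha> \<gamma> \<Sigma> (lam (-1 - int i)) * \<omega>1 ^ i)))"
  shows "\<forall>lam \<in> Ihat (Tmap \<alpha> \<gamma> \<Sigma> \<omega>2) J.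
           summable (\<lambda>i. Afun \<alpha> \<gamma> \<Sigma> (lam (-1 - int i)) * \<omega>1 ^ i)
         \<and> x lam > 0
         \<and> fmap \<alpha> \<gamma> \<Sigma> \<omega>1 (lam 0) (x lam) = x (That lam)"
proof
  fix lam assume "lam \<in> Ihat (Tmap \<alpha> \<gamma> \<Sigma> \<omega>2) J"
  have b: "b < 1 + \<gamma>" using assms(8-10) by auto
  from \<open>lam \<in> _\<close> have le_b: "lam i \<le> b" for i
    using assms(8) by (auto simp: Ihat_def)
  have A_pos: "Afun \<alpha> \<gamma> \<Sigma> (lam i) > 0" for i
    using Afun_pos assms(1-3) le_less_trans[OF le_b b] by blast
  define c where "c i = Afun \<alpha> \<gamma> \<Sigma> (lam (-1 - int i))" for i
  have "\<bar>c i\<bar> \<le> Afun \<alpha> \<gamma> \<Sigma> b" for i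
    using A_pos Afun_mono[OF _ le_b b] assms(3) by (simp add: c_def less_imp_le)
  then have summable: "summable (\<lambda>i. c i * \<omega>1 ^ i)"
    using summable_bounded_mult_geometric assms(4,5) by blast
  have S_pos: "(\<Sum>i. c i * \<omega>1 ^ i) > 0"
    using suminf_pos2[OF summable, of 0] A_pos assms(4) by (simp add: c_def less_imp_le)
  have "fmap \<alpha> \<gamma> \<Sigma> \<omega>1 (lam 0) (x lam) = x (That lam)"
    using fmap_inv_sqrt[of \<omega>1 "\<Sum>i. c i * \<omega>1 ^ i"] suminf_past_That[of "Afun \<alpha> \<gamma> \<Sigma>" lam \<omega>1]
      summable A_pos[of 0] S_pos assms(4,5) by (simp add: x_def c_def less_imp_le)
  moreover have "x lam > 0"
    using S_pos assms(5) by (simp add: x_def c_def)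
  ultimately show "summable (\<lambda>i. Afun \<alpha> \<gamma> \<Sigma> (lam (-1 - int i)) * \<omega>1 ^ i) \<and> x lam > 0
         \<and> fmap \<alpha> \<gamma> \<Sigma> \<omega>1 (lam 0) (x lam) = x (That lam)"
    using summable by (simp add: c_def)
qed

end
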